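(* Let $f$ be a function with $f\notin\mathscr{P}$ but $f^2\in\mathscr{P}$. Then by pinning some variables of $f$ to constants one obtains a function $h$ of rank 2 and essential arity 2 whose compressed function $\underline{h}$ is a binary function with $\underline{h}\notin\mathscr{P}$ and $\underline{h}^2\in\mathscr{P}$. Furthermore, all four values of $\underline{h}$ are nonzero.
   Context: Functions are maps $\{0,1\}^n\to\mathbb{C}$; $f^2$ is the pointwise square. $\mathscr{P}$: products of unary functions, binary equalities $[1,0,1]$ and binary disequalities $[0,1,0]$. Pinning a variable means fixing it to $0$ or $1$. If $h$ has affine support (an affine subspace of $\mathbb{Z}_2^n$) of dimension $r$ (the rank of $h$) with free variables $x_{j_1},\dots,x_{j_r}$, then every variable $x_k$ equals on $\mathrm{supp}(h)$ an affine function $\sum_t d_tx_{j_t}+e$ of the free variables; variables whose linear parts $\sum_t d_tx_{j_t}$ coincide (and are nonzero) form a bundle, and the essential arity is the number of nonempty bundles. The compressed function $\underline{h}(x_{j_1},\dots,x_{j_r})$ is the value of $h$ at the unique point of $\mathrm{supp}(h)$ with these free-variable values. *)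

theory Defs
  imports Complex_Main
begin

text \<open>A function of arity n is a map bool list => complex, considered only on
  lists of length n (entry i of the list is the value of variable x_i).\<close>

datatype factor = Unary nat "bool \<Rightarrow> complex" | EqF nat nat | NeqF nat nat

fun factor_val :: "factor \<Rightarrow> bool list \<Rightarrow> complex" where
  "factor_val (Unary i u) xs = u (xs ! i)"
| "factor_val (EqF i j) xs = (if xs ! i = xs ! j then 1 else 0)"
| "factor_val (NeqF i j) xs = (if xs ! i \<noteq> xs ! j then 1 else 0)"

fun factor_ok :: "nat \<Rightarrow> factor \<Rightarrow> bool" where
  "factor_ok n (Unary i u) = (i < n)"
| "factor_ok n (EqF i j) = (i < n \<and> j < n)"
| "factor_ok n (NeqF i j) = (i < n \<and> j < n)"

text \<open>The class P: products of unary functions, binary equalities and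
  disequalities (a constant factor is allowed, which only matters for arity 0).\<close>
definition in_P :: "nat \<Rightarrow> (bool list \<Rightarrow> complex) \<Rightarrow> bool" where
  "in_P n f \<longleftrightarrow> (\<exists>c fs. (\<forall>F\<in>set fs. factor_ok n F) \<and>
      (\<forall>xs. length xs = n \<longrightarrow> f xs = c * prod_list (map (\<lambda>F. factor_val F xs) fs)))"

definition fsq :: "(bool list \<Rightarrow> complex) \<Rightarrow> bool list \<Rightarrow> complex" where
  "fsq f = (\<lambda>xs. (f xs)^2)"

text \<open>Pinning: a list p of length n; Some b pins the variable to b, None keeps
  it free. The remaining variables, in their original order, form the arguments
  of the pinned function.\<close>
fun fill :: "bool option list \<Rightarrow> bool list \<Rightarrow> bool list" where
  "fill [] ys = []"
| "fill (Some b # ps) ys = b # fill ps ys"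
| "fill (None # ps) (y # ys) = y # fill ps ys"
| "fill (None # ps) [] = False # fill ps []"

definition pin :: "(bool list \<Rightarrow> complex) \<Rightarrow> bool option list \<Rightarrow> bool list \<Rightarrow> complex" where
  "pin f p = (\<lambda>ys. f (fill p ys))"

definition pin_arity :: "bool option list \<Rightarrow> nat" where
  "pin_arity p = length (filter (\<lambda>q. q = None) p)"

definition supp :: "nat \<Rightarrow> (bool list \<Rightarrow> complex) \<Rightarrow> bool list set" where
  "supp m h = {xs. length xs = m \<and> h xs \<noteq> 0}"

definition xor3 :: "bool list \<Rightarrow> bool list \<Rightarrow> bool list \<Rightarrow> bool list" where
  "xor3 x y z = map (\<lambda>(a, b, c). a \<noteq> (b \<noteq> c)) (zip x (zip y z))"

definition affine_support :: "nat \<Rightarrow> (bool list \<Rightarrow> complex) \<Rightarrow> bool" where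
  "affine_support m h \<longleftrightarrow> supp m h \<noteq> {} \<and>
     (\<forall>x\<in>supp m h. \<forall>y\<in>supp m h. \<forall>z\<in>supp m h. xor3 x y z \<in> supp m h)"

text \<open>Rank = dimension r of the affine support (which has 2^r points).\<close>
definition has_rank :: "nat \<Rightarrow> (bool list \<Rightarrow> complex) \<Rightarrow> nat \<Rightarrow> bool" where
  "has_rank m h r \<longleftrightarrow> affine_support m h \<and> card (supp m h) = 2 ^ r"

definition free_vars :: "nat \<Rightarrow> (bool list \<Rightarrow> complex) \<Rightarrow> nat list \<Rightarrow> bool" where
  "free_vars m h J \<longleftrightarrow> distinct J \<and> (\<forall>j\<in>set J. j < m) \<and>
     bij_betw (\<lambda>xs. map (\<lambda>j. xs ! j) J) (supp m h) {v. length v = length J}"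

definition supp_pt :: "nat \<Rightarrow> (bool list \<Rightarrow> complex) \<Rightarrow> nat list \<Rightarrow> bool list \<Rightarrow> bool list" where
  "supp_pt m h J v = (THE xs. xs \<in> supp m h \<and> map (\<lambda>j. xs ! j) J = v)"

text \<open>Linear part (coefficient vector d) of variable x_k as an affine function
  of the free variables: d_t = x_k(e_t) + x_k(0).\<close>
definition lin_part :: "nat \<Rightarrow> (bool list \<Rightarrow> complex) \<Rightarrow> nat list \<Rightarrow> nat \<Rightarrow> bool list" where
  "lin_part m h J k = map (\<lambda>t. supp_pt m h J (map (\<lambda>s. s = t) [0..<length J]) ! k
       \<noteq> supp_pt m h J (replicate (length J) False) ! k) [0..<length J]"

text \<open>Essential arity: number of nonempty bundles, i.e. of distinct nonzero
  linear parts occurring among the variables.\<close>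
definition ess_arity :: "nat \<Rightarrow> (bool list \<Rightarrow> complex) \<Rightarrow> nat list \<Rightarrow> nat" where
  "ess_arity m h J = card {lin_part m h J k | k. k < m \<and> True \<in> set (lin_part m h J k)}"

definition compressed :: "nat \<Rightarrow> (bool list \<Rightarrow> complex) \<Rightarrow> nat list \<Rightarrow> bool list \<Rightarrow> complex" where
  "compressed m h J = (\<lambda>v. h (supp_pt m h J v))"

end

theory Submission
  imports Defs
begin

text \<open>Write \<open>f\<^sup>2 = c \<cdot> \<Prod>F\<close> with \<open>c \<noteq> 0\<close> and factors \<open>F\<close> from \<open>\<P>\<close>. The support of \<open>f\<close> is then the common
  support of the factors, and the binary factors link the variables into components; flipping a
  union of components keeps a point inside the support as soon as flipping each component does.
  For a support point \<open>w\<close> and two components \<open>A\<close>, \<open>B\<close> consider the 2\<times>2 matrix of values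
  \<open>f (w + sA + tB)\<close>, \<open>s, t \<in> {0, 1}\<close>. If all these matrices (with entries in the support) are
  singular, flipping components acts multiplicatively on \<open>f\<close>, so \<open>f\<close> is the support indicator
  times one unary function per component, i.e. \<open>f \<in> \<P>\<close>. Otherwise pin every variable outside
  \<open>A \<union> B\<close> to its value in \<open>w\<close>: the support of the result is \<open>{w + sA + tB}\<close>, of rank 2 with
  bundles \<open>A\<close> and \<open>B\<close>, and its compression is the nonsingular matrix above. The squared matrix is
  singular because every factor of \<open>f\<^sup>2\<close> depends on only one component, hence sees only one of
  \<open>A\<close>, \<open>B\<close>.\<close>

section \<open>Binary functions and singular 2\<times>2 matrices\<close>

definition det_zero :: "(bool \<Rightarrow> bool \<Rightarrow> 'a::comm_monoid_mult) \<Rightarrow> bool" where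
  "det_zero q \<longleftrightarrow> q False False * q True True = q False True * q True False"

lemma det_zero_swap: "det_zero (\<lambda>x y. q y x) \<longleftrightarrow> det_zero q"
  by (auto simp: det_zero_def mult.commute)

lemma det_zero_negate: "det_zero (\<lambda>x y. q (a \<noteq> x) (b \<noteq> y)) \<longleftrightarrow> det_zero q"
  by (cases a; cases b) (auto simp: det_zero_def mult.commute)

lemma det_zero_left: "det_zero (\<lambda>x y. u x)"
  and det_zero_right: "det_zero (\<lambda>x y. v y)"
  by (simp_all add: det_zero_def mult.commute)

lemma det_zero_mult:
  assumes "det_zero q" and "det_zero r"
  shows "det_zero (\<lambda>x y. q x y * r x y)"
  using assms unfolding det_zero_def by (metis mult.assoc mult.left_commute)

lemma det_zero_prod_list:
  "(\<And>F. F \<in> set fs \<Longrightarrow> det_zero (q F)) \<Longrightarrow> det_zero (\<lambda>x y. prod_list (map (\<lambda>F. q F x y) fs))"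
  by (induction fs) (auto simp: det_zero_right intro: det_zero_mult)

lemma in_P_zero: "(\<And>xs. length xs = n \<Longrightarrow> f xs = 0) \<Longrightarrow> in_P n f"
  unfolding in_P_def by (intro exI[of _ 0] exI[of _ "[]"]) simp

lemma length_2_cases:
  assumes "length xs = 2"
  obtains x y where "xs = [x, y]"
  using assms by (cases xs; cases "tl xs") auto

lemma det_zero_factor_val:
  assumes ok: "factor_ok 2 F" and nz: "\<And>x y. factor_val F [x, y] \<noteq> 0"
  shows "det_zero (\<lambda>x y. factor_val F [x, y])"
proof (cases F)
  case (Unary i u)
  with ok have "i = 0 \<or> i = 1" by auto
  with Unary show ?thesis by (auto simp: det_zero_left det_zero_right)
next
  case (EqF i j)
  with ok nz[of False True] have "i = j" by (auto simp: less_2_cases_iff)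
  with EqF show ?thesis by (simp add: det_zero_def)
next
  case (NeqF i j)
  with ok nz[of False False] show ?thesis by (auto simp: less_2_cases_iff)
qed

lemma in_P_2_iff_det_zero:
  assumes nz: "\<And>x y. g [x, y] \<noteq> 0"
  shows "in_P 2 g \<longleftrightarrow> det_zero (\<lambda>x y. g [x, y])"
proof
  assume "in_P 2 g"
  then obtain c fs where ok: "\<forall>F\<in>set fs. factor_ok 2 F"
    and g: "\<And>x y. g [x, y] = c * prod_list (map (\<lambda>F. factor_val F [x, y]) fs)"
    unfolding in_P_def by fastforce
  have "factor_val F [x, y] \<noteq> 0" if "F \<in> set fs" for F x y
    using nz[of x y] that unfolding g by (auto simp: prod_list_zero_iff)
  then have "det_zero (\<lambda>x y. prod_list (map (\<lambda>F. factor_val F [x, y]) fs))"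
    using ok by (intro det_zero_prod_list det_zero_factor_val) auto
  then show "det_zero (\<lambda>x y. g [x, y])"
    unfolding g by (rule det_zero_mult[OF det_zero_left])
next
  assume det: "det_zero (\<lambda>x y. g [x, y])"
  define c where "c = g [False, False]"
  define u where "u x = g [x, False] / c" for x
  define v where "v y = g [False, y] / c" for y
  have "g [x, y] = c * (u x * v y)" for x y
    using det nz[of False False] by (cases x; cases y) (auto simp: c_def u_def v_def det_zero_def field_simps)
  then have "\<forall>xs. length xs = 2 \<longrightarrow> g xs = c * prod_list (map (\<lambda>F. factor_val F xs) [Unary 0 u, Unary 1 v])"
    by (auto elim: length_2_cases)
  then show "in_P 2 g"
    unfolding in_P_def by (intro exI[of _ c] exI[of _ "[Unary 0 u, Unary 1 v]"]) simp
qed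

section \<open>Supports of rank two with two bundles\<close>

lemma supp_pt_proj:
  assumes "free_vars m h J" and "x \<in> supp m h"
  shows "supp_pt m h J (map (\<lambda>j. x ! j) J) = x"
  using assms unfolding supp_pt_def free_vars_def bij_betw_def inj_on_def
  by (intro the_equality) auto

lemma supp_pt_in_supp:
  assumes "free_vars m h J" and "length v = length J"
  shows "supp_pt m h J v \<in> supp m h"
proof -
  obtain x where "x \<in> supp m h" "map (\<lambda>j. x ! j) J = v"
    using assms unfolding free_vars_def bij_betw_def by (metis (mono_tags, lifting) imageE mem_Collect_eq)
  then show ?thesis
    using supp_pt_proj[OF assms(1)] by metis
qed

lemma compressed_nonzero:
  assumes "free_vars m h J" and "length v = length J"
  shows "compressed m h J v \<noteq> 0"
  using supp_pt_in_supp[OF assms] by (simp add: compressed_def supp_def)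

definition rank2_core :: "nat \<Rightarrow> (bool list \<Rightarrow> complex) \<Rightarrow> bool" where
  "rank2_core m h \<longleftrightarrow> has_rank m h 2 \<and> (\<exists>J. free_vars m h J) \<and>
     (\<forall>J. free_vars m h J \<longrightarrow>
        ess_arity m h J = 2 \<and>
        \<not> in_P 2 (compressed m h J) \<and> in_P 2 (fsq (compressed m h J)) \<and>
        (\<forall>v. length v = 2 \<longrightarrow> compressed m h J v \<noteq> 0))"

definition bundle_point :: "nat \<Rightarrow> bool list \<Rightarrow> (nat \<Rightarrow> bool) \<Rightarrow> bool \<Rightarrow> bool \<Rightarrow> bool list" where
  "bundle_point m y0 \<alpha> s t = map (\<lambda>k. y0 ! k \<noteq> (if \<alpha> k then s else t)) [0..<m]"

lemma length_bundle_point [simp]: "length (bundle_point m y0 \<alpha> s t) = m"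
  by (simp add: bundle_point_def)

lemma nth_bundle_point [simp]:
  "k < m \<Longrightarrow> bundle_point m y0 \<alpha> s t ! k = (y0 ! k \<noteq> (if \<alpha> k then s else t))"
  by (simp add: bundle_point_def)

lemma bundle_point_neg: "bundle_point m y0 (\<lambda>k. \<not> \<alpha> k) s t = bundle_point m y0 \<alpha> t s"
  by (simp add: bundle_point_def)

locale two_bundles =
  fixes m :: nat and h :: "bool list \<Rightarrow> complex" and y0 :: "bool list" and \<alpha> :: "nat \<Rightarrow> bool"
  assumes supp_eq: "supp m h = {bundle_point m y0 \<alpha> s t | s t. True}"
    and bundle1: "\<exists>k<m. \<alpha> k" and bundle2: "\<exists>k<m. \<not> \<alpha> k"
begin

lemma bundle_point_in_supp: "bundle_point m y0 \<alpha> s t \<in> supp m h"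
  using supp_eq by blast

lemma bundle_point_eq_iff:
  "bundle_point m y0 \<alpha> s t = bundle_point m y0 \<alpha> s' t' \<longleftrightarrow> s = s' \<and> t = t'"
proof
  obtain k1 k2 where "k1 < m" "\<alpha> k1" "k2 < m" "\<not> \<alpha> k2"
    using bundle1 bundle2 by blast
  then show "bundle_point m y0 \<alpha> s t = bundle_point m y0 \<alpha> s' t' \<Longrightarrow> s = s' \<and> t = t'"
    by (metis nth_bundle_point)
qed simp

lemma card_supp: "card (supp m h) = 4"
proof -
  have "supp m h = (\<lambda>(s, t). bundle_point m y0 \<alpha> s t) ` UNIV"
    using supp_eq by auto
  moreover have "inj (\<lambda>(s, t). bundle_point m y0 \<alpha> s t)"
    by (auto simp: inj_def bundle_point_eq_iff)
  ultimately show ?thesis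
    by (simp add: card_image UNIV_Times_UNIV[symmetric] card_cartesian_product del: UNIV_Times_UNIV)
qed

lemma has_rank_2: "has_rank m h 2"
proof -
  have "xor3 (bundle_point m y0 \<alpha> s1 t1) (bundle_point m y0 \<alpha> s2 t2) (bundle_point m y0 \<alpha> s3 t3)
      = bundle_point m y0 \<alpha> (s1 \<noteq> (s2 \<noteq> s3)) (t1 \<noteq> (t2 \<noteq> t3))" for s1 t1 s2 t2 s3 t3
    by (rule nth_equalityI) (auto simp: xor3_def)
  then have "affine_support m h"
    unfolding affine_support_def supp_eq by fastforce
  then show ?thesis
    using card_supp by (simp add: has_rank_def)
qed

lemma bundle_point_through:
  fixes x y :: bool
  assumes "\<alpha> j1 \<noteq> \<alpha> j2" "j1 < m" "j2 < m"
  defines "P \<equiv> bundle_point m y0 (\<lambda>k. \<alpha> k = \<alpha> j1) (y0 ! j1 \<noteq> x) (y0 ! j2 \<noteq> y)"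
  shows "P \<in> supp m h" and "map (\<lambda>j. P ! j) [j1, j2] = [x, y]"
proof -
  show "P \<in> supp m h"
  proof (cases "\<alpha> j1")
    case True
    then show ?thesis using bundle_point_in_supp by (simp add: P_def)
  next
    case False
    then show ?thesis using bundle_point_in_supp by (simp add: P_def bundle_point_neg)
  qed
  show "map (\<lambda>j. P ! j) [j1, j2] = [x, y]"
    using assms by auto
qed

lemma free_vars_iff: "free_vars m h [j1, j2] \<longleftrightarrow> j1 < m \<and> j2 < m \<and> \<alpha> j1 \<noteq> \<alpha> j2"
proof
  assume "free_vars m h [j1, j2]"
  then have j: "j1 < m" "j2 < m" and inj: "inj_on (\<lambda>xs. map (\<lambda>j. xs ! j) [j1, j2]) (supp m h)"
    by (auto simp: free_vars_def bij_betw_def)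
  have "\<alpha> j1 \<noteq> \<alpha> j2"
  proof
    assume same: "\<alpha> j1 = \<alpha> j2"
    define P where "P = (if \<alpha> j1 then bundle_point m y0 \<alpha> False True else bundle_point m y0 \<alpha> True False)"
    have "map (\<lambda>j. bundle_point m y0 \<alpha> False False ! j) [j1, j2] = map (\<lambda>j. P ! j) [j1, j2]"
      using j same by (simp add: P_def)
    moreover have "P \<in> supp m h"
      by (simp add: P_def bundle_point_in_supp)
    ultimately have "bundle_point m y0 \<alpha> False False = P"
      using inj_onD[OF inj] bundle_point_in_supp by blast
    then show False
      by (simp add: P_def bundle_point_eq_iff split: if_splits)
  qed
  with j show "j1 < m \<and> j2 < m \<and> \<alpha> j1 \<noteq> \<alpha> j2" by blast
next
  assume j: "j1 < m \<and> j2 < m \<and> \<alpha> j1 \<noteq> \<alpha> j2"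
  let ?proj = "\<lambda>xs. map (\<lambda>j. xs ! j) [j1, j2]"
  have "inj_on ?proj (supp m h)"
  proof (rule inj_onI)
    fix P Q assume "P \<in> supp m h" "Q \<in> supp m h" and proj: "?proj P = ?proj Q"
    then obtain s t s' t' where P: "P = bundle_point m y0 \<alpha> s t" and Q: "Q = bundle_point m y0 \<alpha> s' t'"
      unfolding supp_eq by blast
    have "P ! j1 = Q ! j1" "P ! j2 = Q ! j2"
      using proj by simp_all
    with j have "s = s' \<and> t = t'"
      unfolding P Q by (cases "\<alpha> j1") auto
    then show "P = Q" by (simp add: P Q)
  qed
  moreover have "?proj ` supp m h = {v. length v = 2}"
  proof (intro equalityI subsetI)
    fix v :: "bool list"
    assume "v \<in> {v. length v = 2}"
    then obtain x y where "v = [x, y]" by (auto elim: length_2_cases)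
    then show "v \<in> ?proj ` supp m h"
      using j bundle_point_through[of j1 j2 x y] by (intro rev_image_eqI) auto
  qed (auto simp: supp_def)
  moreover have "distinct [j1, j2]"
    using j by auto
  ultimately show "free_vars m h [j1, j2]"
    using j by (simp add: free_vars_def bij_betw_def numeral_2_eq_2)
qed

lemma free_vars_two:
  assumes "free_vars m h J"
  obtains j1 j2 where "J = [j1, j2]" "j1 < m" "j2 < m" "\<alpha> j1 \<noteq> \<alpha> j2"
proof -
  have "bij_betw (\<lambda>xs. map (\<lambda>j. xs ! j) J) (supp m h) {v. length v = length J}"
    using assms by (simp add: free_vars_def)
  then have "card {v :: bool list. length v = length J} = 4"
    using bij_betw_same_card card_supp by metis
  then have "(2::nat) ^ length J = 2 ^ 2"
    using card_lists_length_eq[of "UNIV :: bool set" "length J"] by simp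
  then have "length J = 2"
    using power_inject_exp[of "2::nat" "length J" 2] by simp
  then obtain j1 j2 where "J = [j1, j2]" by (elim length_2_cases)
  with assms that show thesis by (simp add: free_vars_iff)
qed

lemma length_free_vars: "free_vars m h J \<Longrightarrow> length J = 2"
  by (metis free_vars_two length_Cons list.size(3) numeral_2_eq_2)

lemma exists_free_vars: "\<exists>J. free_vars m h J"
  using bundle1 bundle2 free_vars_iff by blast

lemma supp_pt_two:
  assumes j: "j1 < m" "j2 < m" "\<alpha> j1 \<noteq> \<alpha> j2"
  shows "supp_pt m h [j1, j2] [x, y] = bundle_point m y0 (\<lambda>k. \<alpha> k = \<alpha> j1) (y0 ! j1 \<noteq> x) (y0 ! j2 \<noteq> y)"
proof -
  have "free_vars m h [j1, j2]"
    using j free_vars_iff by blast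
  from supp_pt_proj[OF this bundle_point_through(1)[OF j(3,1,2)]]
  show ?thesis
    unfolding bundle_point_through(2)[OF j(3,1,2)] .
qed

lemma det_zero_compressed:
  assumes "free_vars m h J"
  shows "det_zero (\<lambda>x y. \<phi> (compressed m h J [x, y])) \<longleftrightarrow> det_zero (\<lambda>s t. \<phi> (h (bundle_point m y0 \<alpha> s t)))"
proof -
  obtain j1 j2 where J: "J = [j1, j2]" and j: "j1 < m" "j2 < m" "\<alpha> j1 \<noteq> \<alpha> j2"
    using assms by (rule free_vars_two)
  have c: "compressed m h J [x, y] = h (bundle_point m y0 (\<lambda>k. \<alpha> k = \<alpha> j1) (y0 ! j1 \<noteq> x) (y0 ! j2 \<noteq> y))" for x y
    unfolding compressed_def J supp_pt_two[OF j] ..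
  show ?thesis
  proof (cases "\<alpha> j1")
    case True
    then show ?thesis
      unfolding c using det_zero_negate[where q = "\<lambda>s t. \<phi> (h (bundle_point m y0 \<alpha> s t))"] by simp
  next
    case False
    let ?Q = "\<lambda>s t. \<phi> (h (bundle_point m y0 \<alpha> s t))"
    have "det_zero (\<lambda>x y. \<phi> (compressed m h J [x, y])) \<longleftrightarrow> det_zero (\<lambda>x y. ?Q (y0 ! j2 \<noteq> y) (y0 ! j1 \<noteq> x))"
      using False unfolding c by (simp add: bundle_point_neg)
    also have "\<dots> \<longleftrightarrow> det_zero (\<lambda>x y. ?Q (y0 ! j2 \<noteq> x) (y0 ! j1 \<noteq> y))"
      by (rule det_zero_swap)
    also have "\<dots> \<longleftrightarrow> det_zero ?Q"
      by (rule det_zero_negate)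
    finally show ?thesis .
  qed
qed

lemma lin_part_two:
  assumes j: "j1 < m" "j2 < m" "\<alpha> j1 \<noteq> \<alpha> j2" and k: "k < m"
  shows "lin_part m h [j1, j2] k = [\<alpha> k = \<alpha> j1, \<alpha> k = \<alpha> j2]"
proof -
  have "[0..<length [j1, j2]] = [0, 1]"
    by (simp add: upt_rec)
  then show ?thesis
    using j k by (auto simp: lin_part_def supp_pt_two)
qed

lemma ess_arity_two:
  assumes "free_vars m h J"
  shows "ess_arity m h J = 2"
proof -
  obtain j1 j2 where J: "J = [j1, j2]" and j: "j1 < m" "j2 < m" "\<alpha> j1 \<noteq> \<alpha> j2"
    using assms by (rule free_vars_two)
  have lp1: "lin_part m h J j1 = [True, False]" and lp2: "lin_part m h J j2 = [False, True]"
    using j by (simp_all add: J lin_part_two)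
  have "{lin_part m h J k | k. k < m \<and> True \<in> set (lin_part m h J k)} = {[True, False], [False, True]}"
  proof (intro equalityI subsetI)
    fix v assume "v \<in> {lin_part m h J k | k. k < m \<and> True \<in> set (lin_part m h J k)}"
    then obtain k where "k < m" "v = lin_part m h J k" by blast
    then show "v \<in> {[True, False], [False, True]}"
      using j by (auto simp: J lin_part_two)
  next
    fix v assume "v \<in> {[True, False], [False, True]}"
    then show "v \<in> {lin_part m h J k | k. k < m \<and> True \<in> set (lin_part m h J k)}"
      using lp1 lp2 j(1,2) by force
  qed
  then show ?thesis
    by (simp add: ess_arity_def)
qed

theorem rank2_coreI:
  assumes "\<not> det_zero (\<lambda>s t. h (bundle_point m y0 \<alpha> s t))"
    and "det_zero (\<lambda>s t. (h (bundle_point m y0 \<alpha> s t))\<^sup>2)"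
  shows "rank2_core m h"
proof -
  have "\<not> in_P 2 (compressed m h J) \<and> in_P 2 (fsq (compressed m h J))" if J: "free_vars m h J" for J
  proof -
    have nz: "compressed m h J [x, y] \<noteq> 0" "fsq (compressed m h J) [x, y] \<noteq> 0" for x y
      using compressed_nonzero[OF J] length_free_vars[OF J] by (simp_all add: fsq_def)
    show ?thesis
      unfolding in_P_2_iff_det_zero[where g = "compressed m h J", OF nz(1)]
        in_P_2_iff_det_zero[where g = "fsq (compressed m h J)", OF nz(2)]
      using assms det_zero_compressed[OF J, where \<phi> = id] det_zero_compressed[OF J, where \<phi> = "\<lambda>z. z\<^sup>2"]
      by (simp add: fsq_def)
  qed
  moreover have "compressed m h J v \<noteq> 0" if "free_vars m h J" "length v = 2" for J v
    using compressed_nonzero[OF that(1)] length_free_vars[OF that(1)] that(2) by simp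
  ultimately show ?thesis
    using has_rank_2 exists_free_vars ess_arity_two by (simp add: rank2_core_def)
qed

end

section \<open>Pinning the variables outside two disjoint sets\<close>

fun unfill :: "bool option list \<Rightarrow> bool list \<Rightarrow> bool list" where
  "unfill (q # ps) (x # xs) = (if q = None then x # unfill ps xs else unfill ps xs)"
| "unfill _ _ = []"

lemma pin_arity_Nil [simp]: "pin_arity [] = 0"
  and pin_arity_Cons [simp]: "pin_arity (q # ps) = (if q = None then Suc (pin_arity ps) else pin_arity ps)"
  by (simp_all add: pin_arity_def)

lemma length_fill: "length (fill p ys) = length p"
  by (induction p ys rule: fill.induct) auto

lemma length_unfill: "length x = length p \<Longrightarrow> length (unfill p x) = pin_arity p"
  by (induction p arbitrary: x) (auto simp: length_Suc_conv)

lemma unfill_fill: "length ys = pin_arity p \<Longrightarrow> unfill p (fill p ys) = ys"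
proof (induction p arbitrary: ys)
  case (Cons q ps)
  then show ?case
    by (cases q; cases ys) auto
qed simp

lemma nth_fill_pinned: "i < length p \<Longrightarrow> p ! i = Some b \<Longrightarrow> fill p ys ! i = b"
  by (induction p ys arbitrary: i rule: fill.induct) (auto simp: nth_Cons split: nat.splits)

lemma fill_unfill:
  assumes "length x = length p" and "\<And>i b. i < length p \<Longrightarrow> p ! i = Some b \<Longrightarrow> x ! i = b"
  shows "fill p (unfill p x) = x"
  using assms
proof (induction p arbitrary: x)
  case (Cons q ps)
  then obtain y xs where x: "x = y # xs" by (cases x) auto
  have "fill ps (unfill ps xs) = xs"
  proof (rule Cons.IH)
    show "length xs = length ps" using Cons.prems(1) by (simp add: x)
    show "xs ! i = b" if "i < length ps" "ps ! i = Some b" for i b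
      using Cons.prems(2)[of "Suc i" b] that by (simp add: x)
  qed
  moreover have "q = Some b \<Longrightarrow> y = b" for b
    using Cons.prems(2)[of 0] by (simp add: x)
  ultimately show ?case
    by (cases q) (auto simp: x)
qed simp

lemma nth_unfill:
  assumes "k < pin_arity p"
  obtains i where "i < length p" "p ! i = None" "\<And>x. length x = length p \<Longrightarrow> unfill p x ! k = x ! i"
  using assms
proof (induction p arbitrary: k thesis)
  case (Cons q ps)
  show ?case
  proof (cases "q = None \<and> k = 0")
    case True
    then show ?thesis
      by (intro Cons.prems(1)[of 0]) (auto simp: length_Suc_conv)
  next
    case False
    then obtain k' where k': "k' < pin_arity ps" "k = (if q = None then Suc k' else k')"
      using Cons.prems(2) by (cases q; cases k) auto
    obtain i where "i < length ps" "ps ! i = None" "\<And>x. length x = length ps \<Longrightarrow> unfill ps x ! k' = x ! i"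
      using Cons.IH k'(1) by blast
    then show ?thesis
      using k'(2) by (intro Cons.prems(1)[of "Suc i"]) (auto simp: length_Suc_conv)
  qed
qed simp

lemma unfill_nth_free:
  assumes "i < length p" and "p ! i = None"
  obtains k where "k < pin_arity p" "\<And>x. length x = length p \<Longrightarrow> unfill p x ! k = x ! i"
  using assms
proof (induction p arbitrary: i thesis)
  case (Cons q ps)
  show ?case
  proof (cases i)
    case 0
    with Cons.prems show ?thesis
      by (intro Cons.prems(1)[of 0]) (auto simp: length_Suc_conv)
  next
    case (Suc i')
    then obtain k where "k < pin_arity ps" "\<And>x. length x = length ps \<Longrightarrow> unfill ps x ! k = x ! i'"
      using Cons.IH Cons.prems(2,3) by auto
    with Suc show ?thesis
      by (intro Cons.prems(1)[of "if q = None then Suc k else k"]) (auto simp: length_Suc_conv)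
  qed
qed simp

definition flip :: "nat set \<Rightarrow> bool list \<Rightarrow> bool list" where
  "flip S x = map (\<lambda>k. x ! k \<noteq> (k \<in> S)) [0..<length x]"

lemma length_flip [simp]: "length (flip S x) = length x"
  by (simp add: flip_def)

lemma nth_flip [simp]: "k < length x \<Longrightarrow> flip S x ! k = (x ! k \<noteq> (k \<in> S))"
  by (simp add: flip_def)

lemma flip_empty [simp]: "flip {} x = x"
  by (rule nth_equalityI) auto

lemma flip_disagreement: "length x = length z \<Longrightarrow> x = flip {k. k < length z \<and> x ! k \<noteq> z ! k} z"
  by (rule nth_equalityI) auto

definition flip_pair :: "nat set \<Rightarrow> nat set \<Rightarrow> bool \<Rightarrow> bool \<Rightarrow> bool list \<Rightarrow> bool list" where
  "flip_pair A B s t = flip ((if s then A else {}) \<union> (if t then B else {}))"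

locale pin_pair =
  fixes w :: "bool list" and A B :: "nat set"
  assumes disjoint: "A \<inter> B = {}"
begin

definition pinning :: "bool option list" where
  "pinning = map (\<lambda>i. if i \<in> A \<union> B then None else Some (w ! i)) [0..<length w]"

definition base :: "bool list" where
  "base = unfill pinning w"

text \<open>\<open>in_A k\<close> tells whether the \<open>k\<close>-th free variable of the pinned function lies in \<open>A\<close>.\<close>

definition in_A :: "nat \<Rightarrow> bool" where
  "in_A k = unfill pinning (map (\<lambda>i. i \<in> A) [0..<length w]) ! k"

abbreviation m :: nat where
  "m \<equiv> pin_arity pinning"

lemma length_pinning [simp]: "length pinning = length w"
  by (simp add: pinning_def)

lemma pinning_None: "i < length w \<Longrightarrow> pinning ! i = None \<longleftrightarrow> i \<in> A \<union> B"
  by (simp add: pinning_def)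

lemma pinning_Some: "i < length w \<Longrightarrow> pinning ! i = Some b \<longleftrightarrow> i \<notin> A \<union> B \<and> b = w ! i"
  by (auto simp: pinning_def)

lemma unfill_flip_pair: "unfill pinning (flip_pair A B s t w) = bundle_point m base in_A s t"
proof (rule nth_equalityI)
  show "length (unfill pinning (flip_pair A B s t w)) = length (bundle_point m base in_A s t)"
    by (simp add: flip_pair_def length_unfill)
  fix k assume "k < length (unfill pinning (flip_pair A B s t w))"
  then have k: "k < m"
    by (simp add: flip_pair_def length_unfill)
  then obtain i where i: "i < length w" "pinning ! i = None"
    and unfill_k: "\<And>x. length x = length w \<Longrightarrow> unfill pinning x ! k = x ! i"
    by (metis length_pinning nth_unfill)
  have "i \<in> A \<union> B"
    using i pinning_None by blast
  then have "(i \<in> (if s then A else {}) \<union> (if t then B else {})) = (if i \<in> A then s else t)"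
    using disjoint by auto
  then show "unfill pinning (flip_pair A B s t w) ! k = bundle_point m base in_A s t ! k"
    using i k by (simp add: unfill_k flip_pair_def base_def in_A_def)
qed

lemma fill_bundle_point: "fill pinning (bundle_point m base in_A s t) = flip_pair A B s t w"
  unfolding unfill_flip_pair[symmetric]
  by (rule fill_unfill) (auto simp: flip_pair_def pinning_Some)

lemma nth_fill_outside: "i < length w \<Longrightarrow> i \<notin> A \<union> B \<Longrightarrow> fill pinning ys ! i = w ! i"
  by (simp add: nth_fill_pinned pinning_Some)

lemma fill_eq_flip_pair:
  "length ys = m \<Longrightarrow> fill pinning ys = flip_pair A B s t w \<Longrightarrow> ys = bundle_point m base in_A s t"
  by (metis unfill_fill unfill_flip_pair)

lemma in_A_witness:
  assumes "a \<in> A" "a < length w"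
  shows "\<exists>k<m. in_A k"
proof -
  obtain k where "k < m" "\<And>x. length x = length w \<Longrightarrow> unfill pinning x ! k = x ! a"
    using assms unfill_nth_free[of a pinning] pinning_None by auto
  with assms show ?thesis
    by (auto simp: in_A_def)
qed

lemma not_in_A_witness:
  assumes "b \<in> B" "b < length w"
  shows "\<exists>k<m. \<not> in_A k"
proof -
  obtain k where "k < m" "\<And>x. length x = length w \<Longrightarrow> unfill pinning x ! k = x ! b"
    using assms unfill_nth_free[of b pinning] pinning_None by auto
  moreover have "b \<notin> A"
    using assms disjoint by blast
  ultimately show ?thesis
    using assms by (auto simp: in_A_def)
qed

end

section \<open>Components of a function whose square is in \<open>\<P>\<close>\<close>

fun nonzero_indicator :: "factor \<Rightarrow> factor" where
  "nonzero_indicator (Unary i u) = Unary i (\<lambda>b. if u b = 0 then 0 else 1)"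
| "nonzero_indicator F = F"

lemma factor_ok_nonzero_indicator: "factor_ok n (nonzero_indicator F) = factor_ok n F"
  by (cases F) auto

lemma prod_list_nonzero_indicator:
  "prod_list (map (\<lambda>F. factor_val (nonzero_indicator F) x) fs) = (if \<forall>F\<in>set fs. factor_val F x \<noteq> 0 then 1 else 0)"
proof -
  have "factor_val (nonzero_indicator F) x = (if factor_val F x = 0 then 0 else 1)" for F
    by (cases F) auto
  then show ?thesis
    by (induction fs) auto
qed

locale square_in_P =
  fixes n :: nat and f :: "bool list \<Rightarrow> complex" and c :: complex and fs :: "factor list"
  assumes factors_ok: "\<forall>F\<in>set fs. factor_ok n F"
    and square_eq: "\<And>xs. length xs = n \<Longrightarrow> (f xs)\<^sup>2 = c * prod_list (map (\<lambda>F. factor_val F xs) fs)"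
    and c_nonzero: "c \<noteq> 0"
begin

definition linked :: "(nat \<times> nat) set" where
  "linked = {(i, j). EqF i j \<in> set fs \<or> EqF j i \<in> set fs \<or> NeqF i j \<in> set fs \<or> NeqF j i \<in> set fs}"

definition component :: "nat \<Rightarrow> nat set" where
  "component i = {j. (i, j) \<in> linked\<^sup>*}"

definition saturated :: "nat set \<Rightarrow> bool" where
  "saturated S \<longleftrightarrow> (\<forall>i j. (i, j) \<in> linked \<longrightarrow> (i \<in> S \<longleftrightarrow> j \<in> S))"

lemma supp_iff_factors: "xs \<in> supp n f \<longleftrightarrow> length xs = n \<and> (\<forall>F\<in>set fs. factor_val F xs \<noteq> 0)"
proof -
  have "f xs \<noteq> 0 \<longleftrightarrow> (\<forall>F\<in>set fs. factor_val F xs \<noteq> 0)" if "length xs = n"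
  proof -
    have "f xs \<noteq> 0 \<longleftrightarrow> (f xs)\<^sup>2 \<noteq> 0" by simp
    also have "\<dots> \<longleftrightarrow> (\<forall>F\<in>set fs. factor_val F xs \<noteq> 0)"
      using square_eq[OF that] c_nonzero by (auto simp: prod_list_zero_iff)
    finally show ?thesis .
  qed
  then show ?thesis
    by (auto simp: supp_def)
qed

lemma component_refl: "i \<in> component i"
  by (simp add: component_def)

lemma sym_linked: "sym linked"
  by (auto simp: linked_def sym_def)

lemma component_sym: "j \<in> component i \<Longrightarrow> i \<in> component j"
  using sym_rtrancl[OF sym_linked] unfolding component_def sym_def by blast

lemma component_eq: "j \<in> component i \<Longrightarrow> component j = component i"
  using component_sym unfolding component_def by (blast intro: rtrancl_trans)

lemma component_disjoint: "j \<notin> component i \<Longrightarrow> component i \<inter> component j = {}"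
  using component_eq component_refl by blast

lemma component_subset:
  assumes "saturated S" and "i \<in> S"
  shows "component i \<subseteq> S"
proof
  fix j assume "j \<in> component i"
  then have "(i, j) \<in> linked\<^sup>*" by (simp add: component_def)
  then show "j \<in> S"
    by (induction rule: rtrancl_induct) (use assms in \<open>auto simp: saturated_def\<close>)
qed

lemma saturated_component: "saturated (component i)"
  unfolding saturated_def component_def
  using sym_linked by (auto intro: rtrancl_into_rtrancl dest: symD)

lemma component_bounded:
  assumes "i < n"
  shows "component i \<subseteq> {..<n}"
proof
  fix j assume "j \<in> component i"
  then have "(i, j) \<in> linked\<^sup>*" by (simp add: component_def)
  then show "j \<in> {..<n}"
    by (induction rule: rtrancl_induct) (use assms factors_ok in \<open>fastforce simp: linked_def\<close>)+
qed

lemma saturated_Un: "saturated A \<Longrightarrow> saturated B \<Longrightarrow> saturated (A \<union> B)"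
  and saturated_Diff: "saturated A \<Longrightarrow> saturated B \<Longrightarrow> saturated (A - B)"
  by (auto simp: saturated_def)

lemma factor_local:
  assumes "F \<in> set fs"
  obtains i where "i < n" "\<And>x y. (\<forall>k\<in>component i. x ! k = y ! k) \<Longrightarrow> factor_val F x = factor_val F y"
proof (cases F)
  case (Unary i u)
  with assms factors_ok that[of i] show thesis
    using component_refl by fastforce
next
  case (EqF i j)
  with assms have "j \<in> component i"
    by (auto simp: component_def linked_def)
  with EqF assms factors_ok that[of i] show thesis
    using component_refl by fastforce
next
  case (NeqF i j)
  with assms have "j \<in> component i"
    by (auto simp: component_def linked_def)
  with NeqF assms factors_ok that[of i] show thesis
    using component_refl by fastforce
qed

lemma component_subset_or_disjoint:
  assumes "saturated S"
  shows "component i \<subseteq> S \<or> component i \<inter> S = {}"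
  using component_subset[OF assms] component_eq by blast

lemma factor_val_flip:
  assumes "F \<in> set fs" and "length z = n"
  obtains i where "i < n"
    "\<And>S T. component i \<inter> S = component i \<inter> T \<Longrightarrow> factor_val F (flip S z) = factor_val F (flip T z)"
proof -
  obtain i where i: "i < n" and local: "\<And>x y. \<forall>k\<in>component i. x ! k = y ! k \<Longrightarrow> factor_val F x = factor_val F y"
    using factor_local[OF assms(1)] by blast
  have "factor_val F (flip S z) = factor_val F (flip T z)" if "component i \<inter> S = component i \<inter> T" for S T
  proof (rule local, intro ballI)
    fix k assume "k \<in> component i"
    moreover have "k < length z"
      using component_bounded[OF i] assms(2) calculation by auto
    ultimately show "flip S z ! k = flip T z ! k"
      using that by auto
  qed
  with i that show thesis by blast
qed

lemma flip_saturated_in_supp: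
  assumes z: "z \<in> supp n f" and T: "saturated T"
    and cover: "\<And>i. i \<in> T \<Longrightarrow> \<exists>S. saturated S \<and> i \<in> S \<and> flip S z \<in> supp n f"
  shows "flip T z \<in> supp n f"
  unfolding supp_iff_factors
proof (intro conjI ballI)
  have lz: "length z = n"
    using z by (simp add: supp_def)
  then show "length (flip T z) = n" by simp
  fix F assume F: "F \<in> set fs"
  obtain i where flip_eq: "\<And>S T. component i \<inter> S = component i \<inter> T \<Longrightarrow> factor_val F (flip S z) = factor_val F (flip T z)"
    using factor_val_flip[OF F lz] by blast
  show "factor_val F (flip T z) \<noteq> 0"
  proof (cases "i \<in> T")
    case True
    then obtain S where S: "saturated S" "i \<in> S" "flip S z \<in> supp n f"
      using cover by blast
    have "component i \<subseteq> S" "component i \<subseteq> T"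
      using component_subset[OF S(1,2)] component_subset[OF T True] .
    then have "factor_val F (flip T z) = factor_val F (flip S z)"
      by (intro flip_eq) blast
    then show ?thesis
      using S(3) F by (simp add: supp_iff_factors)
  next
    case False
    then have "component i \<inter> T = component i \<inter> {}"
      using component_subset_or_disjoint[OF T, of i] component_refl[of i] by blast
    then have "factor_val F (flip T z) = factor_val F (flip {} z)"
      by (rule flip_eq)
    then show ?thesis
      using z F by (simp add: supp_iff_factors)
  qed
qed

lemma flip_saturated_subset_in_supp:
  assumes z: "z \<in> supp n f" and S1: "saturated S1" "flip S1 z \<in> supp n f"
    and S2: "saturated S2" "flip S2 z \<in> supp n f" and T: "saturated T" "T \<subseteq> S1 \<union> S2"
  shows "flip T z \<in> supp n f"
  using z T(1) by (rule flip_saturated_in_supp) (use S1 S2 T(2) in blast)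

lemma saturated_disagreement:
  assumes x: "x \<in> supp n f" and z: "z \<in> supp n f"
  shows "saturated {k. k < n \<and> x ! k \<noteq> z ! k}"
  unfolding saturated_def
proof (intro allI impI)
  fix i j assume "(i, j) \<in> linked"
  then obtain F where F: "F \<in> set fs" "F = EqF i j \<or> F = EqF j i \<or> F = NeqF i j \<or> F = NeqF j i"
    by (auto simp: linked_def)
  then have "i < n" "j < n"
    using factors_ok by auto
  moreover have "factor_val F x \<noteq> 0" "factor_val F z \<noteq> 0"
    using F x z by (auto simp: supp_iff_factors)
  ultimately show "i \<in> {k. k < n \<and> x ! k \<noteq> z ! k} \<longleftrightarrow> j \<in> {k. k < n \<and> x ! k \<noteq> z ! k}"
    using F(2) by (elim disjE) (auto split: if_splits)
qed

lemma saturated_within_components: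
  assumes "saturated S" and "S \<subseteq> component a \<union> component b"
  shows "S = (if a \<in> S then component a else {}) \<union> (if b \<in> S then component b else {})"
proof (intro equalityI subsetI)
  fix k assume k: "k \<in> S"
  have "component k \<subseteq> S"
    using component_subset[OF assms(1) k] .
  moreover have "k \<in> component a \<Longrightarrow> a \<in> component k" "k \<in> component b \<Longrightarrow> b \<in> component k"
    by (simp_all add: component_sym)
  ultimately show "k \<in> (if a \<in> S then component a else {}) \<union> (if b \<in> S then component b else {})"
    using assms(2) k by auto
next
  fix k assume "k \<in> (if a \<in> S then component a else {}) \<union> (if b \<in> S then component b else {})"
  then show "k \<in> S"
    using component_subset[OF assms(1), of a] component_subset[OF assms(1), of b] by (auto split: if_splits)
qed

lemma square_det_zero:
  assumes A: "saturated A" and B: "saturated B" and AB: "A \<inter> B = {}" and w: "length w = n"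
  shows "det_zero (\<lambda>s t. (f (flip_pair A B s t w))\<^sup>2)"
proof -
  have "det_zero (\<lambda>s t. factor_val F (flip_pair A B s t w))" if F: "F \<in> set fs" for F
  proof -
    obtain i where flip_eq: "\<And>S T. component i \<inter> S = component i \<inter> T \<Longrightarrow> factor_val F (flip S w) = factor_val F (flip T w)"
      using factor_val_flip[OF F w] by blast
    consider "component i \<inter> A = {}" | "component i \<inter> B = {}"
      using component_subset_or_disjoint[OF A, of i] AB by blast
    then show ?thesis
    proof cases
      case 1
      then have "(\<lambda>s t. factor_val F (flip_pair A B s t w)) = (\<lambda>s t. factor_val F (flip_pair A B False t w))"
        unfolding flip_pair_def by (intro ext flip_eq) auto
      then show ?thesis
        by (simp only: det_zero_right)
    next
      case 2
      then have "(\<lambda>s t. factor_val F (flip_pair A B s t w)) = (\<lambda>s t. factor_val F (flip_pair A B s False w))"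
        unfolding flip_pair_def by (intro ext flip_eq) auto
      then show ?thesis
        by (simp only: det_zero_left)
    qed
  qed
  then have "det_zero (\<lambda>s t. c * prod_list (map (\<lambda>F. factor_val F (flip_pair A B s t w)) fs))"
    by (intro det_zero_mult[OF det_zero_left] det_zero_prod_list)
  moreover have "(f (flip_pair A B s t w))\<^sup>2 = c * prod_list (map (\<lambda>F. factor_val F (flip_pair A B s t w)) fs)" for s t
    using w by (intro square_eq) (simp add: flip_pair_def)
  ultimately show ?thesis
    by simp
qed

definition obstruction :: "bool list \<Rightarrow> nat \<Rightarrow> nat \<Rightarrow> bool" where
  "obstruction w a b \<longleftrightarrow> a < n \<and> b < n \<and> b \<notin> component a \<and>
     (\<forall>s t. flip_pair (component a) (component b) s t w \<in> supp n f) \<and>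
     \<not> det_zero (\<lambda>s t. f (flip_pair (component a) (component b) s t w))"


lemma saturated_induct [consumes 2, case_names empty remove]:
  assumes "saturated S" and "S \<subseteq> {..<n}"
    and empty: "P {}"
    and remove: "\<And>S b. saturated S \<Longrightarrow> S \<subseteq> {..<n} \<Longrightarrow> b \<in> S \<Longrightarrow> P (S - component b) \<Longrightarrow> P S"
  shows "P S"
  using assms(1,2)
proof (induction "card S" arbitrary: S rule: less_induct)
  case (less S)
  show ?case
  proof (cases "S = {}")
    case True
    with empty show ?thesis by simp
  next
    case False
    then obtain b where b: "b \<in> S" by blast
    have "S - component b \<subset> S"
      using b component_refl by blast
    then have "card (S - component b) < card S"
      using less.prems(2) by (meson finite_lessThan finite_subset psubset_card_mono)
    moreover have "saturated (S - component b)"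
      using less.prems(1) saturated_component by (rule saturated_Diff)
    ultimately have "P (S - component b)"
      using less.hyps less.prems(2) by blast
    with less.prems b show ?thesis
      by (rule remove)
  qed
qed

lemma no_obstruction_mult:
  assumes no_obs: "\<And>w a b. \<not> obstruction w a b" and z: "z \<in> supp n f"
    and a: "a < n" "flip (component a) z \<in> supp n f"
    and S: "saturated S" "S \<subseteq> {..<n}" "flip S z \<in> supp n f" "component a \<inter> S = {}"
  shows "f (flip (S \<union> component a) z) * f z = f (flip S z) * f (flip (component a) z)"
  using S
proof (induction S rule: saturated_induct)
  case empty
  then show ?case by (simp add: mult.commute)
next
  case (remove S b)
  \<comment> \<open>Peel off the component of \<open>b\<close>: the matrix of the components of \<open>a\<close> and \<open>b\<close> at
    \<open>w = flip S' z\<close> is singular, which carries the identity from \<open>S'\<close> over to \<open>S\<close>.\<close>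
  let ?Ca = "component a" and ?Cb = "component b"
  define S' where "S' = S - ?Cb"
  define w where "w = flip S' z"
  have Cb_S: "?Cb \<subseteq> S"
    using component_subset remove.hyps(1,3) by blast
  have b_Ca: "b \<notin> ?Ca"
    using remove.hyps(3) remove.prems(2) by blast
  note in_supp = flip_saturated_subset_in_supp[OF z remove.hyps(1) remove.prems(1) saturated_component a(2)]
  have sat_S': "saturated S'"
    unfolding S'_def using remove.hyps(1) saturated_component by (rule saturated_Diff)
  have S'_supp: "flip S' z \<in> supp n f"
    using in_supp[OF sat_S'] by (auto simp: S'_def)
  have IH: "f (flip (S' \<union> ?Ca) z) * f z = f (flip S' z) * f (flip ?Ca z)"
    using remove.IH S'_supp remove.prems(2) by (auto simp: S'_def)
  have flips: "flip_pair ?Ca ?Cb False False w = flip S' z"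
    "flip_pair ?Ca ?Cb True False w = flip (S' \<union> ?Ca) z"
    "flip_pair ?Ca ?Cb False True w = flip S z"
    "flip_pair ?Ca ?Cb True True w = flip (S \<union> ?Ca) z"
    using Cb_S remove.prems(2) unfolding flip_pair_def w_def S'_def by (auto intro!: nth_equalityI)
  have "flip_pair ?Ca ?Cb s t w \<in> supp n f" for s t
    using S'_supp in_supp[OF saturated_Un[OF sat_S' saturated_component]]
      remove.prems(1) in_supp[OF saturated_Un[OF remove.hyps(1) saturated_component]]
    by (cases s; cases t) (auto simp: flips S'_def)
  then have "det_zero (\<lambda>s t. f (flip_pair ?Ca ?Cb s t w))"
    using no_obs[of w a b] a(1) b_Ca remove.hyps(2,3) by (auto simp: obstruction_def)
  then have det: "f (flip S' z) * f (flip (S \<union> ?Ca) z) = f (flip S z) * f (flip (S' \<union> ?Ca) z)"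
    by (simp add: det_zero_def flips)
  have "f (flip S' z) \<noteq> 0"
    using S'_supp by (simp add: supp_def)
  moreover have "f (flip S' z) * (f (flip (S \<union> ?Ca) z) * f z) = f (flip S' z) * (f (flip S z) * f (flip ?Ca z))"
    using det IH by (metis mult.assoc mult.commute)
  ultimately show ?case
    by simp
qed

definition representatives :: "nat set" where
  "representatives = {i. i < n \<and> (\<forall>j\<in>component i. i \<le> j)}"

lemma finite_representatives: "finite representatives"
  by (simp add: representatives_def)

lemma representative_unique:
  "i \<in> representatives \<Longrightarrow> k \<in> representatives \<Longrightarrow> i \<in> component k \<Longrightarrow> i = k"
  using component_sym by (fastforce simp: representatives_def intro: antisym)

lemma representative_exists:
  assumes "b < n"
  obtains k where "k \<in> representatives" "component k = component b"
proof
  have fin: "finite (component b)"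
    using component_bounded[OF assms] finite_subset by blast
  define k where "k = Min (component b)"
  have k: "k \<in> component b"
    unfolding k_def using fin component_refl by (blast intro: Min_in)
  then show "component k = component b"
    by (rule component_eq)
  then show "k \<in> representatives"
    using k fin component_bounded[OF assms] by (auto simp: representatives_def k_def)
qed

lemma no_obstruction_product:
  assumes no_obs: "\<And>w a b. \<not> obstruction w a b" and z: "z \<in> supp n f"
    and S: "saturated S" "S \<subseteq> {..<n}" "flip S z \<in> supp n f"
  shows "f (flip S z) = f z * (\<Prod>k\<in>representatives \<inter> S. f (flip (component k) z) / f z)"
  using S
proof (induction S rule: saturated_induct)
  case empty
  then show ?case by simp
next
  case (remove S b)
  obtain k where k: "k \<in> representatives" "component k = component b"
    using remove.hyps(2,3) representative_exists by blast
  let ?Ck = "component k"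
  define S' where "S' = S - ?Ck"
  have Ck_S: "?Ck \<subseteq> S"
    using component_subset[OF remove.hyps(1,3)] k(2) by simp
  have in_supp: "flip T z \<in> supp n f" if "saturated T" "T \<subseteq> S" for T
    using flip_saturated_subset_in_supp[OF z remove.hyps(1) remove.prems remove.hyps(1) remove.prems that(1)] that(2)
    by simp
  have sat_S': "saturated S'"
    unfolding S'_def using remove.hyps(1) saturated_component by (rule saturated_Diff)
  have S'_supp: "flip S' z \<in> supp n f"
    using in_supp[OF sat_S'] by (auto simp: S'_def)
  have IH: "f (flip S' z) = f z * (\<Prod>k\<in>representatives \<inter> S'. f (flip (component k) z) / f z)"
    using remove.IH S'_supp k(2) by (simp add: S'_def)
  have k_n: "k < n"
    using k(1) by (simp add: representatives_def)
  have "f (flip (S' \<union> ?Ck) z) * f z = f (flip S' z) * f (flip ?Ck z)"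
    using no_obstruction_mult[OF no_obs z k_n in_supp[OF saturated_component Ck_S] sat_S' _ S'_supp]
      remove.hyps(2) S'_def by blast
  moreover have "S' \<union> ?Ck = S"
    using Ck_S S'_def by blast
  moreover have "f z \<noteq> 0"
    using z by (simp add: supp_def)
  ultimately have "f (flip S z) = f z * ((f (flip ?Ck z) / f z) * (f (flip S' z) / f z))"
    by (simp add: field_simps)
  moreover have "representatives \<inter> S = insert k (representatives \<inter> S')" "k \<notin> representatives \<inter> S'"
    using k Ck_S S'_def component_refl representative_unique by auto
  ultimately show ?case
    using IH \<open>f z \<noteq> 0\<close> by (simp add: representatives_def)
qed

lemma no_obstruction_value:
  assumes no_obs: "\<And>w a b. \<not> obstruction w a b" and z: "z \<in> supp n f" and xs: "xs \<in> supp n f"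
  shows "f xs = f z * (\<Prod>k\<in>representatives. if xs ! k = z ! k then 1 else f (flip (component k) z) / f z)"
proof -
  let ?S = "{k. k < n \<and> xs ! k \<noteq> z ! k}"
  have "xs = flip ?S z"
    using flip_disagreement[of xs z] xs z by (simp add: supp_def)
  then have "f xs = f z * (\<Prod>k\<in>representatives \<inter> ?S. f (flip (component k) z) / f z)"
    using no_obstruction_product[OF no_obs z saturated_disagreement[OF xs z]] xs by auto
  also have "\<dots> = f z * (\<Prod>k\<in>representatives. if xs ! k = z ! k then 1 else f (flip (component k) z) / f z)"
    unfolding prod.inter_restrict[OF finite_representatives]
    by (intro arg_cong[where f = "(*) (f z)"] prod.cong) (auto simp: representatives_def)
  finally show ?thesis .
qed

theorem no_obstruction_in_P:
  assumes no_obs: "\<And>w a b. \<not> obstruction w a b"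
  shows "in_P n f"
proof (cases "supp n f = {}")
  case True
  then show ?thesis
    by (intro in_P_zero) (auto simp: supp_def)
next
  case False
  then obtain z where z: "z \<in> supp n f" by blast
  \<comment> \<open>One unary factor per component, and the factors of \<open>f\<^sup>2\<close> reduced to their support.\<close>
  define u where "u k b = (if b = z ! k then 1 else f (flip (component k) z) / f z)" for k b
  define gs where "gs = map (\<lambda>k. Unary k (u k)) (sorted_list_of_set representatives) @ map nonzero_indicator fs"
  have "\<forall>F\<in>set gs. factor_ok n F"
    using factors_ok finite_representatives by (auto simp: gs_def factor_ok_nonzero_indicator representatives_def)
  moreover have "f xs = f z * prod_list (map (\<lambda>F. factor_val F xs) gs)" if xs: "length xs = n" for xs
  proof (cases "xs \<in> supp n f")
    case True
    have "(\<Prod>k\<in>representatives. u k (xs ! k)) = prod_list (map (\<lambda>k. u k (xs ! k)) (sorted_list_of_set representatives))"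
      using finite_representatives prod.distinct_set_conv_list[of "sorted_list_of_set representatives" "\<lambda>k. u k (xs ! k)"]
      by simp
    with True show ?thesis
      by (simp add: no_obstruction_value[OF no_obs z True] u_def gs_def o_def prod_list_nonzero_indicator supp_iff_factors)
  next
    case False
    then have "f xs = 0"
      using xs by (simp add: supp_def)
    moreover have "\<not> (\<forall>F\<in>set fs. factor_val F xs \<noteq> 0)"
      using False xs by (simp add: supp_iff_factors)
    ultimately show ?thesis
      by (auto simp: gs_def o_def prod_list_nonzero_indicator)
  qed
  ultimately show ?thesis
    unfolding in_P_def by blast
qed

end

section \<open>Pinning at an obstruction\<close>

locale obstruction_setting = square_in_P +
  fixes w :: "bool list" and a b :: nat
  assumes obstruction: "obstruction w a b"
begin

lemma a_less: "a < n" and b_less: "b < n" and b_notin: "b \<notin> component a"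
  and flip_pair_in_supp: "flip_pair (component a) (component b) s t w \<in> supp n f"
  and not_det_zero: "\<not> det_zero (\<lambda>s t. f (flip_pair (component a) (component b) s t w))"
  using obstruction by (auto simp: obstruction_def)

lemma w_in_supp: "w \<in> supp n f"
  using flip_pair_in_supp[of False False] by (simp add: flip_pair_def)

lemma length_w: "length w = n"
  using w_in_supp by (simp add: supp_def)

sublocale pin_pair w "component a" "component b"
  using component_disjoint[OF b_notin] by unfold_locales

lemma pin_bundle_point:
  "pin f pinning (bundle_point m base in_A s t) = f (flip_pair (component a) (component b) s t w)"
  by (simp add: pin_def fill_bundle_point)

lemma supp_pinned: "supp m (pin f pinning) = {bundle_point m base in_A s t | s t. True}"
proof (intro equalityI subsetI)
  fix ys assume ys: "ys \<in> supp m (pin f pinning)"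
  let ?x = "fill pinning ys"
  have x: "?x \<in> supp n f"
    using ys length_w by (simp add: supp_def pin_def length_fill)
  let ?S = "{k. k < n \<and> ?x ! k \<noteq> w ! k}"
  have "?S \<subseteq> component a \<union> component b"
    using nth_fill_outside[of _ ys] length_w by blast
  with saturated_disagreement[OF x w_in_supp]
  have S_eq: "?S = (if a \<in> ?S then component a else {}) \<union> (if b \<in> ?S then component b else {})"
    by (rule saturated_within_components)
  have "?x = flip ?S w"
    using flip_disagreement[of ?x w] length_w by (simp add: length_fill)
  then have "?x = flip_pair (component a) (component b) (a \<in> ?S) (b \<in> ?S) w"
    unfolding flip_pair_def by (subst (asm) S_eq)
  then have "ys = bundle_point m base in_A (a \<in> ?S) (b \<in> ?S)"
    using ys by (intro fill_eq_flip_pair) (simp_all add: supp_def)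
  then show "ys \<in> {bundle_point m base in_A s t | s t. True}" by blast
next
  fix ys assume "ys \<in> {bundle_point m base in_A s t | s t. True}"
  then show "ys \<in> supp m (pin f pinning)"
    using pin_bundle_point flip_pair_in_supp by (auto simp: supp_def)
qed

theorem rank2_core_pinned: "rank2_core m (pin f pinning)"
proof -
  have "\<exists>k<m. in_A k" "\<exists>k<m. \<not> in_A k"
    using in_A_witness[of a] not_in_A_witness[of b] component_refl a_less b_less length_w by auto
  with supp_pinned interpret two_bundles m "pin f pinning" base in_A
    by unfold_locales
  show ?thesis
  proof (rule rank2_coreI)
    show "\<not> det_zero (\<lambda>s t. pin f pinning (bundle_point m base in_A s t))"
      using not_det_zero by (simp add: pin_bundle_point)
    show "det_zero (\<lambda>s t. (pin f pinning (bundle_point m base in_A s t))\<^sup>2)"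
      using square_det_zero[OF saturated_component saturated_component component_disjoint[OF b_notin] length_w]
      by (simp add: pin_bundle_point)
  qed
qed

end

theorem lemma4p14:
  fixes n :: nat and f :: "bool list \<Rightarrow> complex"
  assumes "\<not> in_P n f" and "in_P n (fsq f)"
  shows "\<exists>p. length p = n \<and>
    (let h = pin f p; m = pin_arity p in
       has_rank m h 2 \<and> (\<exists>J. free_vars m h J) \<and>
       (\<forall>J. free_vars m h J \<longrightarrow>
          ess_arity m h J = 2 \<and>
          \<not> in_P 2 (compressed m h J) \<and> in_P 2 (fsq (compressed m h J)) \<and>
          (\<forall>v. length v = 2 \<longrightarrow> compressed m h J v \<noteq> 0)))"
proof -
  obtain c fs where ok: "\<forall>F\<in>set fs. factor_ok n F"
    and sq: "\<forall>xs. length xs = n \<longrightarrow> (f xs)\<^sup>2 = c * prod_list (map (\<lambda>F. factor_val F xs) fs)"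
    using assms(2) unfolding in_P_def fsq_def by blast
  have "c \<noteq> 0"
  proof
    assume "c = 0"
    with sq have "in_P n f"
      by (intro in_P_zero) simp
    with assms(1) show False ..
  qed
  then interpret square_in_P n f c fs
    using ok sq by unfold_locales auto
  obtain w a b where "obstruction w a b"
    using no_obstruction_in_P assms(1) by blast
  then interpret obstruction_setting n f c fs w a b
    by unfold_locales
  show ?thesis
    unfolding Let_def rank2_core_def[symmetric]
    using rank2_core_pinned length_w by (intro exI[of _ pinning]) simp
qed

end
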